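(* Let $N$ be a nonnegative integer and $m\in\{0,1,\dots,N\}$. Then for all $x\in\mathbb{C}$: $$K_{2m}(x+N+1;\tfrac12,2N+1)=\frac{(\frac12)_m}{(-N-\frac12)_m}\,R_m(x(x+1);-\tfrac12,\tfrac12,N),$$ $$K_{2m+1}(x+N+1;\tfrac12,2N+1)=\frac{(\frac32)_m}{(-N-\frac12)_{m+1}}\,(x+\tfrac12)\,R_m(x(x+1);\tfrac12,-\tfrac12,N).$$
   Context: $(c)_k=c(c+1)\cdots(c+k-1)$. Krawtchouk polynomials: $K_n(x;p,N)={}_2F_1(-n,-x;-N;p^{-1})=\sum_{k=0}^n\frac{(-n)_k(-x)_k}{(-N)_k\,k!}p^{-k}$. Dual Hahn polynomials: $R_n(y(y+\gamma+\delta+1);\gamma,\delta,N)={}_3F_2(-n,-y,y+\gamma+\delta+1;\gamma+1,-N;1)$, regarded as a polynomial in $\lambda=y(y+\gamma+\delta+1)$; here $\gamma+\delta+1=1$, so $R_m(x(x+1);\gamma,\delta,N)={}_3F_2(-m,-x,x+1;\gamma+1,-N;1)$. *)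

theory Defs
  imports "HOL-Analysis.Analysis"
begin

definition krawtchouk :: "nat \<Rightarrow> complex \<Rightarrow> complex \<Rightarrow> nat \<Rightarrow> complex" where
  "krawtchouk n x p NN = (\<Sum>k\<le>n. pochhammer (- of_nat n) k * pochhammer (- x) k /
      (pochhammer (- of_nat NN) k * of_nat (fact k)) * (inverse p) ^ k)"

text \<open>Dual Hahn polynomial R_n(lambda(y); gamma, delta, N) = 3F2(-n,-y,y+gamma+delta+1; gamma+1,-N; 1),
  where lambda(y) = y(y+gamma+delta+1). It depends on y only through lambda(y);
  we parametrize it by y.\<close>
definition dual_hahn :: "nat \<Rightarrow> complex \<Rightarrow> complex \<Rightarrow> complex \<Rightarrow> nat \<Rightarrow> complex" where
  "dual_hahn n y \<gamma> \<delta> NN = (\<Sum>k\<le>n. pochhammer (- of_nat n) k * pochhammer (- y) k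
      * pochhammer (y + \<gamma> + \<delta> + 1) k /
      (pochhammer (\<gamma> + 1) k * pochhammer (- of_nat NN) k * of_nat (fact k)))"

end

theory Submission
  imports Defs
begin

text \<open>
  Both sides satisfy the same three-term recurrence in the degree n and agree for n = 0, 1.
  For p = 1/2 and argument x + N + 1 the Krawtchouk recurrence reads
  (2N - n) K(n+2) + (n+1) K(n) = -(2x+1) K(n+1).
  Interlace the two normalised dual Hahn families (even n with (\<gamma>, \<delta>) = (-1/2, 1/2), odd n
  with (1/2, -1/2)). Each step of the recurrence then becomes a contiguous relation between
  R(\<lambda>; \<gamma>, \<delta>) and R(\<lambda>; \<gamma>+1, \<delta>-1), checked coefficientwise in the basis (-y)_k (y+\<gamma>+\<delta>+1)_k:
  at even n the step multiplies R_m(\<gamma>+1, \<delta>-1) by \<lambda> + (\<gamma>+1)\<delta>, which at \<gamma> = -1/2 is (x + 1/2)^2,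
  at odd n it trades R_(m+1)(\<gamma>, \<delta>) for R_(m+1) and R_m at (\<gamma>+1, \<delta>-1).
  Since 2N - n \<noteq> 0 for n < 2N, the recurrence determines the sequence up to n = 2N + 1.
\<close>

lemma sum_atMost_extend:
  fixes c P :: "nat \<Rightarrow> 'a::semiring_0"
  assumes "n \<le> L" "\<And>k. n < k \<Longrightarrow> c k = 0"
  shows "(\<Sum>k\<le>n. c k * P k) = (\<Sum>k\<le>L. c k * P k)"
proof (rule sum.mono_neutral_left)
  show "\<forall>i\<in>{..L} - {..n}. c i * P i = 0" using assms(2) by auto
qed (use assms(1) in auto)

lemma sum_mult_shift_basis:
  fixes c P :: "nat \<Rightarrow> 'a::comm_ring"
  assumes "\<And>k. z * P k = e k * P k - P (Suc k)" "c (Suc n) = 0"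
  shows "z * (\<Sum>k\<le>n. c k * P k)
    = (\<Sum>k\<le>Suc n. (e k * c k - (if k = 0 then 0 else c (k - 1))) * P k)"
proof -
  have "z * (\<Sum>k\<le>n. c k * P k) = (\<Sum>k\<le>n. e k * c k * P k - c k * P (Suc k))"
    unfolding sum_distrib_left
  proof (rule sum.cong)
    fix k
    have "z * (c k * P k) = c k * (e k * P k - P (Suc k))"
      by (simp only: mult.left_commute[of z] assms(1))
    then show "z * (c k * P k) = e k * c k * P k - c k * P (Suc k)"
      by (simp add: algebra_simps)
  qed simp
  also have "\<dots> = (\<Sum>k\<le>Suc n. e k * c k * P k) - (\<Sum>k\<le>n. c k * P (Suc k))"
    using assms(2) by (simp add: sum_subtractf)
  also have "(\<Sum>k\<le>n. c k * P (Suc k)) = (\<Sum>k\<le>Suc n. (if k = 0 then 0 else c (k - 1)) * P k)"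
    by (subst sum.atMost_Suc_shift) simp
  finally show ?thesis by (simp add: sum_subtractf left_diff_distrib)
qed

section \<open>The three-term recurrence of the Krawtchouk polynomials\<close>

definition krawtchouk_coeff :: "nat \<Rightarrow> complex \<Rightarrow> nat \<Rightarrow> nat \<Rightarrow> complex" where
  "krawtchouk_coeff M p n k =
     pochhammer (- of_nat n) k / (pochhammer (- of_nat M) k * of_nat (fact k)) * inverse p ^ k"

lemma krawtchouk_coeff_eq_0: "n < k \<Longrightarrow> krawtchouk_coeff M p n k = 0"
  by (simp add: krawtchouk_coeff_def pochhammer_of_nat_eq_0_iff)

lemma krawtchouk_conv_coeff:
  assumes "n \<le> L"
  shows "krawtchouk n X p M = (\<Sum>k\<le>L. krawtchouk_coeff M p n k * pochhammer (- X) k)"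
proof -
  have "krawtchouk n X p M = (\<Sum>k\<le>n. krawtchouk_coeff M p n k * pochhammer (- X) k)"
    unfolding krawtchouk_def krawtchouk_coeff_def by (intro sum.cong) auto
  also have "\<dots> = (\<Sum>k\<le>L. krawtchouk_coeff M p n k * pochhammer (- X) k)"
    using assms by (intro sum_atMost_extend) (auto simp: krawtchouk_coeff_eq_0)
  finally show ?thesis .
qed

lemma krawtchouk_coeff_Suc_right:
  "krawtchouk_coeff M p n (Suc k) = krawtchouk_coeff M p n k
     * (of_nat k - of_nat n) * (inverse p / ((of_nat k - of_nat M) * (of_nat k + 1)))"
proof -
  have "pochhammer (- of_nat n) (Suc k) = pochhammer (- of_nat n) k * (of_nat k - of_nat n :: complex)"
    "pochhammer (- of_nat M) (Suc k) = pochhammer (- of_nat M) k * (of_nat k - of_nat M :: complex)"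
    unfolding pochhammer_rec' by simp_all
  moreover have "of_nat (fact (Suc k)) = (of_nat k + 1) * (of_nat (fact k) :: complex)"
    by (simp add: algebra_simps)
  ultimately show ?thesis
    unfolding krawtchouk_coeff_def
    by (simp add: divide_inverse mult_ac del: fact_Suc of_nat_fact)
qed

lemma krawtchouk_coeff_Suc_Suc:
  "krawtchouk_coeff M p (Suc n) (Suc k) = krawtchouk_coeff M p n k
     * (- of_nat (Suc n)) * (inverse p / ((of_nat k - of_nat M) * (of_nat k + 1)))"
proof -
  have "pochhammer (- of_nat (Suc n)) (Suc k) = pochhammer (- of_nat n :: complex) k * (- of_nat (Suc n))"
    unfolding pochhammer_rec by simp
  moreover have "pochhammer (- of_nat M) (Suc k) = pochhammer (- of_nat M) k * (of_nat k - of_nat M :: complex)"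
    unfolding pochhammer_rec' by simp
  moreover have "of_nat (fact (Suc k)) = (of_nat k + 1) * (of_nat (fact k) :: complex)"
    by (simp add: algebra_simps)
  ultimately show ?thesis
    unfolding krawtchouk_coeff_def
    by (simp add: divide_inverse mult_ac del: fact_Suc of_nat_fact)
qed

lemma pochhammer_minus_of_nat_Suc:
  "of_nat (Suc n) * pochhammer (- of_nat n :: 'a::comm_ring_1) k
    = (of_nat (Suc n) - of_nat k) * pochhammer (- of_nat (Suc n)) k"
proof -
  have "pochhammer (- of_nat (Suc n) :: 'a) (Suc k) = - of_nat (Suc n) * pochhammer (- of_nat n) k"
    unfolding pochhammer_rec by simp
  moreover have "pochhammer (- of_nat (Suc n) :: 'a) (Suc k)
      = (- of_nat (Suc n) + of_nat k) * pochhammer (- of_nat (Suc n)) k"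
    by (rule pochhammer_rec')
  ultimately show ?thesis by (simp add: algebra_simps del: of_nat_Suc)
qed

lemma krawtchouk_coeff_Suc_left:
  "of_nat (Suc n) * krawtchouk_coeff M p n k
    = (of_nat (Suc n) - of_nat k) * krawtchouk_coeff M p (Suc n) k"
proof -
  have "of_nat (Suc n) * krawtchouk_coeff M p n k
      = of_nat (Suc n) * pochhammer (- of_nat n) k
        / (pochhammer (- of_nat M) k * of_nat (fact k)) * inverse p ^ k"
    unfolding krawtchouk_coeff_def by simp
  also have "\<dots> = (of_nat (Suc n) - of_nat k) * pochhammer (- of_nat (Suc n)) k
      / (pochhammer (- of_nat M) k * of_nat (fact k)) * inverse p ^ k"
    unfolding pochhammer_minus_of_nat_Suc ..
  finally show ?thesis
    unfolding krawtchouk_coeff_def by simp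
qed

lemma krawtchouk_coeff_recurrence:
  assumes "p \<noteq> 0" "k \<le> M"
  defines "a \<equiv> krawtchouk_coeff M p"
  shows "p * (of_nat M - of_nat (Suc n)) * a (Suc (Suc n)) k + of_nat (Suc n) * (1 - p) * a n k
    = (p * (of_nat M - of_nat (Suc n)) + of_nat (Suc n) * (1 - p) - of_nat k) * a (Suc n) k
      + (if k = 0 then 0 else a (Suc n) (k - 1))"
proof (cases k)
  case 0
  then show ?thesis by (simp add: a_def krawtchouk_coeff_def algebra_simps)
next
  case (Suc j)
  define t where "t = a (Suc n) j"
  define W where "W = inverse p / ((of_nat j - of_nat M) * (of_nat j + 1) :: complex)"
  have W: "W * ((of_nat j - of_nat M) * (of_nat j + 1) * p) = 1"
  proof -
    have "(of_nat j - of_nat M :: complex) \<noteq> 0"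
      using assms(2) Suc by simp
    moreover have "(of_nat j + 1 :: complex) \<noteq> 0"
      by (metis of_nat_Suc of_nat_neq_0 add.commute)
    ultimately show ?thesis using assms(1) by (simp add: W_def)
  qed
  have c2: "a (Suc (Suc n)) (Suc j) = - t * (of_nat n + 2) * W"
    unfolding t_def a_def krawtchouk_coeff_Suc_Suc W_def[symmetric] by (simp add: algebra_simps)
  have c1: "a (Suc n) (Suc j) = t * (of_nat j - of_nat (Suc n)) * W"
    unfolding t_def a_def krawtchouk_coeff_Suc_right W_def[symmetric] ..
  have c0: "of_nat (Suc n) * a n (Suc j) = (of_nat n - of_nat j) * (t * (of_nat j - of_nat (Suc n)) * W)"
    unfolding a_def krawtchouk_coeff_Suc_left c1[unfolded a_def] by simp
  have "p * (of_nat M - of_nat (Suc n)) * a (Suc (Suc n)) (Suc j) + (1 - p) * (of_nat (Suc n) * a n (Suc j))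
      = W * t * (- p * (of_nat M - of_nat n - 1) * (of_nat n + 2)
                 - (1 - p) * (of_nat j - of_nat n) * (of_nat j - of_nat n - 1))"
    unfolding c2 c0 by (simp add: algebra_simps)
  also have "\<dots> = (p * (of_nat M - of_nat n - 1) + (of_nat n + 1) * (1 - p) - (of_nat j + 1))
                 * (t * (of_nat j - of_nat n - 1) * W)
      + t * (W * ((of_nat j - of_nat M) * (of_nat j + 1) * p))"
    by (simp add: algebra_simps)
  also have "\<dots> = (p * (of_nat M - of_nat (Suc n)) + of_nat (Suc n) * (1 - p) - of_nat (Suc j))
        * a (Suc n) (Suc j) + a (Suc n) j"
    unfolding c1 W t_def by (simp add: algebra_simps)
  finally show ?thesis unfolding Suc by (simp add: algebra_simps)
qed

lemma pochhammer_neg_mult_shift: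
  fixes z :: "'a::comm_ring_1"
  shows "z * pochhammer (- z) k = of_nat k * pochhammer (- z) k - pochhammer (- z) (Suc k)"
  by (simp add: pochhammer_rec' algebra_simps)

lemma krawtchouk_recurrence:
  assumes "p \<noteq> 0" "Suc n < M"
  shows "p * (of_nat M - of_nat (Suc n)) * krawtchouk (Suc (Suc n)) X p M
      + of_nat (Suc n) * (1 - p) * krawtchouk n X p M
    = (p * (of_nat M - of_nat (Suc n)) + of_nat (Suc n) * (1 - p) - X) * krawtchouk (Suc n) X p M"
proof -
  define a where "a = krawtchouk_coeff M p"
  define P where "P = (\<lambda>k. pochhammer (- X) k)"
  define \<alpha> where "\<alpha> = p * (of_nat M - of_nat (Suc n)) + of_nat (Suc n) * (1 - p)"
  define D where "D = (\<lambda>k. of_nat k * a (Suc n) k - (if k = 0 then 0 else a (Suc n) (k - 1)))"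
  have K: "krawtchouk m X p M = (\<Sum>k\<le>Suc (Suc n). a m k * P k)" if "m \<le> Suc (Suc n)" for m
    unfolding a_def P_def using that by (rule krawtchouk_conv_coeff)
  have K0: "krawtchouk n X p M = (\<Sum>k\<le>Suc (Suc n). a n k * P k)"
    and K1: "krawtchouk (Suc n) X p M = (\<Sum>k\<le>Suc (Suc n). a (Suc n) k * P k)"
    and K2: "krawtchouk (Suc (Suc n)) X p M = (\<Sum>k\<le>Suc (Suc n). a (Suc (Suc n)) k * P k)"
    by (simp_all add: K)
  have XK: "X * krawtchouk (Suc n) X p M = (\<Sum>k\<le>Suc (Suc n). D k * P k)"
  proof -
    have "krawtchouk (Suc n) X p M = (\<Sum>k\<le>Suc n. a (Suc n) k * P k)"
      unfolding a_def P_def by (rule krawtchouk_conv_coeff) simp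
    moreover have "X * (\<Sum>k\<le>Suc n. a (Suc n) k * P k) = (\<Sum>k\<le>Suc (Suc n). D k * P k)"
      unfolding D_def P_def a_def
      by (rule sum_mult_shift_basis) (simp_all add: pochhammer_neg_mult_shift krawtchouk_coeff_eq_0)
    ultimately show ?thesis by simp
  qed
  have "p * (of_nat M - of_nat (Suc n)) * krawtchouk (Suc (Suc n)) X p M
      + of_nat (Suc n) * (1 - p) * krawtchouk n X p M
    = (\<Sum>k\<le>Suc (Suc n). (p * (of_nat M - of_nat (Suc n)) * a (Suc (Suc n)) k
        + of_nat (Suc n) * (1 - p) * a n k) * P k)"
    unfolding K0 K2 sum_distrib_left sum.distrib[symmetric] by (intro sum.cong) (simp_all add: algebra_simps)
  also have "\<dots> = (\<Sum>k\<le>Suc (Suc n). (\<alpha> * a (Suc n) k - D k) * P k)"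
    using assms unfolding \<alpha>_def D_def a_def
    by (intro sum.cong refl, subst krawtchouk_coeff_recurrence) (auto simp: algebra_simps)
  also have "\<dots> = \<alpha> * (\<Sum>k\<le>Suc (Suc n). a (Suc n) k * P k) - (\<Sum>k\<le>Suc (Suc n). D k * P k)"
    unfolding sum_distrib_left sum_subtractf[symmetric] by (intro sum.cong) (simp_all add: algebra_simps)
  also have "\<dots> = (\<alpha> - X) * krawtchouk (Suc n) X p M"
    unfolding K1[symmetric] XK[symmetric] by (simp add: algebra_simps)
  finally show ?thesis unfolding \<alpha>_def .
qed

lemma krawtchouk_one: "krawtchouk 1 X p M = 1 - X / (of_nat M * p)"
  by (simp add: krawtchouk_def divide_inverse mult_ac)

section \<open>Contiguous relations of the dual Hahn polynomials\<close>

definition dual_hahn_coeff :: "nat \<Rightarrow> complex \<Rightarrow> nat \<Rightarrow> nat \<Rightarrow> complex" where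
  "dual_hahn_coeff N g n k =
     pochhammer (- of_nat n) k / (pochhammer g k * pochhammer (- of_nat N) k * of_nat (fact k))"

lemma dual_hahn_coeff_eq_0: "n < k \<Longrightarrow> dual_hahn_coeff N g n k = 0"
  by (simp add: dual_hahn_coeff_def pochhammer_of_nat_eq_0_iff)

lemma dual_hahn_conv_coeff:
  assumes "n \<le> L"
  shows "dual_hahn n y \<gamma> \<delta> N = (\<Sum>k\<le>L. dual_hahn_coeff N (\<gamma> + 1) n k
           * (pochhammer (- y) k * pochhammer (y + \<gamma> + \<delta> + 1) k))"
proof -
  have "dual_hahn n y \<gamma> \<delta> N = (\<Sum>k\<le>n. dual_hahn_coeff N (\<gamma> + 1) n k
           * (pochhammer (- y) k * pochhammer (y + \<gamma> + \<delta> + 1) k))"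
    unfolding dual_hahn_def dual_hahn_coeff_def by (intro sum.cong) auto
  also have "\<dots> = (\<Sum>k\<le>L. dual_hahn_coeff N (\<gamma> + 1) n k
           * (pochhammer (- y) k * pochhammer (y + \<gamma> + \<delta> + 1) k))"
    using assms by (intro sum_atMost_extend) (auto simp: dual_hahn_coeff_eq_0)
  finally show ?thesis .
qed

lemma dual_hahn_coeff_Suc_right:
  "dual_hahn_coeff N g n (Suc k) = dual_hahn_coeff N g n k
     * (of_nat k - of_nat n) * (1 / ((g + of_nat k) * (of_nat k - of_nat N) * (of_nat k + 1)))"
proof -
  have "pochhammer (- of_nat n) (Suc k) = pochhammer (- of_nat n) k * (of_nat k - of_nat n :: complex)"
    "pochhammer (- of_nat N) (Suc k) = pochhammer (- of_nat N) k * (of_nat k - of_nat N :: complex)"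
    "pochhammer g (Suc k) = pochhammer g k * (g + of_nat k)"
    unfolding pochhammer_rec' by simp_all
  moreover have "of_nat (fact (Suc k)) = (of_nat k + 1) * (of_nat (fact k) :: complex)"
    by (simp add: algebra_simps)
  ultimately show ?thesis
    unfolding dual_hahn_coeff_def
    by (simp add: divide_inverse mult_ac del: fact_Suc of_nat_fact)
qed

lemma dual_hahn_coeff_Suc_Suc:
  "dual_hahn_coeff N g (Suc n) (Suc k) = dual_hahn_coeff N g n k
     * (- of_nat (Suc n)) * (1 / ((g + of_nat k) * (of_nat k - of_nat N) * (of_nat k + 1)))"
proof -
  have "pochhammer (- of_nat (Suc n)) (Suc k) = pochhammer (- of_nat n :: complex) k * (- of_nat (Suc n))"
    unfolding pochhammer_rec by simp
  moreover have "pochhammer (- of_nat N) (Suc k) = pochhammer (- of_nat N) k * (of_nat k - of_nat N :: complex)"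
    "pochhammer g (Suc k) = pochhammer g k * (g + of_nat k)"
    unfolding pochhammer_rec' by simp_all
  moreover have "of_nat (fact (Suc k)) = (of_nat k + 1) * (of_nat (fact k) :: complex)"
    by (simp add: algebra_simps)
  ultimately show ?thesis
    unfolding dual_hahn_coeff_def
    by (simp add: divide_inverse mult_ac del: fact_Suc of_nat_fact)
qed

lemma dual_hahn_coeff_shift_param:
  assumes "pochhammer g (Suc k) \<noteq> 0"
  shows "g * dual_hahn_coeff N g n k = (g + of_nat k) * dual_hahn_coeff N (g + 1) n k"
proof -
  have "pochhammer g k \<noteq> 0"
    using assms pochhammer_eq_0_mono[of g k "Suc k"] by auto
  moreover have "pochhammer (g + 1) k \<noteq> 0"
    using assms by (simp add: pochhammer_rec)
  moreover have "(g + of_nat k) * pochhammer g k = g * pochhammer (g + 1) k"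
    by (simp only: pochhammer_rec[symmetric] pochhammer_rec'[symmetric])
  ultimately have "g + of_nat k = g * pochhammer (g + 1) k / pochhammer g k"
    by (simp add: field_simps)
  then show ?thesis
    unfolding dual_hahn_coeff_def using \<open>pochhammer (g + 1) k \<noteq> 0\<close> by (simp add: field_simps)
qed

lemma dual_hahn_coeff_contiguous_param:
  assumes "pochhammer g (Suc k) \<noteq> 0"
  shows "g * dual_hahn_coeff N g (Suc n) k
    = (g + of_nat (Suc n)) * dual_hahn_coeff N (g + 1) (Suc n) k
      - of_nat (Suc n) * dual_hahn_coeff N (g + 1) n k"
proof -
  have "g * dual_hahn_coeff N g (Suc n) k = (g + of_nat k) * dual_hahn_coeff N (g + 1) (Suc n) k"
    using assms by (rule dual_hahn_coeff_shift_param)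
  also have "\<dots> = (g + of_nat (Suc n)) * dual_hahn_coeff N (g + 1) (Suc n) k
      - of_nat (Suc n) * dual_hahn_coeff N (g + 1) n k"
  proof (cases k)
    case 0
    then show ?thesis by (simp add: dual_hahn_coeff_def)
  next
    case (Suc j)
    define u where "u = dual_hahn_coeff N (g + 1) n j"
    define V where "V = 1 / ((g + 1 + of_nat j) * (of_nat j - of_nat N) * (of_nat j + 1))"
    have e1: "dual_hahn_coeff N (g + 1) (Suc n) (Suc j) = u * (- of_nat (Suc n)) * V"
      unfolding u_def V_def by (rule dual_hahn_coeff_Suc_Suc)
    have e2: "dual_hahn_coeff N (g + 1) n (Suc j) = u * (of_nat j - of_nat n) * V"
      unfolding u_def V_def by (rule dual_hahn_coeff_Suc_right)
    show ?thesis
      unfolding Suc e1 e2 by (simp add: algebra_simps)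
  qed
  finally show ?thesis .
qed

lemma dual_hahn_contiguous_param:
  assumes "pochhammer (\<gamma> + 1) (Suc (Suc n)) \<noteq> 0"
  shows "(\<gamma> + 1) * dual_hahn (Suc n) y \<gamma> \<delta> N
    = (\<gamma> + of_nat n + 2) * dual_hahn (Suc n) y (\<gamma> + 1) (\<delta> - 1) N
      - of_nat (Suc n) * dual_hahn n y (\<gamma> + 1) (\<delta> - 1) N"
proof -
  define D where "D = dual_hahn_coeff N (\<gamma> + 1)"
  define D' where "D' = dual_hahn_coeff N (\<gamma> + 1 + 1)"
  define Q where "Q = (\<lambda>k. pochhammer (- y) k * pochhammer (y + \<gamma> + \<delta> + 1) k)"
  have R: "dual_hahn (Suc n) y \<gamma> \<delta> N = (\<Sum>k\<le>Suc n. D (Suc n) k * Q k)"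
    unfolding D_def Q_def by (rule dual_hahn_conv_coeff) simp
  have "\<gamma> + 1 + (\<delta> - 1) = \<gamma> + \<delta>" by simp
  then have R': "dual_hahn m y (\<gamma> + 1) (\<delta> - 1) N = (\<Sum>k\<le>Suc n. D' m k * Q k)" if "m \<le> Suc n" for m
    unfolding D'_def Q_def using dual_hahn_conv_coeff[OF that, of y "\<gamma> + 1" "\<delta> - 1" N]
    by (simp add: add.assoc)
  have coeff: "(\<gamma> + 1) * D (Suc n) k = (\<gamma> + of_nat n + 2) * D' (Suc n) k - of_nat (Suc n) * D' n k"
    if "k \<le> Suc n" for k
  proof -
    have "pochhammer (\<gamma> + 1) (Suc k) \<noteq> 0"
      using assms pochhammer_eq_0_mono[of "\<gamma> + 1" "Suc k" "Suc (Suc n)"] that by auto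
    from dual_hahn_coeff_contiguous_param[OF this, of N n]
    show ?thesis unfolding D_def D'_def by (simp add: algebra_simps)
  qed
  show ?thesis
    unfolding R R'[OF order.refl] R'[OF le_SucI, OF order.refl] sum_distrib_left sum_subtractf[symmetric]
    by (intro sum.cong refl) (simp add: coeff left_diff_distrib flip: mult.assoc)
qed

lemma dual_hahn_coeff_contiguous_lambda:
  assumes "pochhammer g (Suc k) \<noteq> 0" "k \<le> N"
  shows "(of_nat k * (of_nat k + g + \<delta>) + g * \<delta>) * dual_hahn_coeff N (g + 1) m k
      - (if k = 0 then 0 else dual_hahn_coeff N (g + 1) m (k - 1))
    = g * (of_nat m - of_nat N) * dual_hahn_coeff N g (Suc m) k
      + g * (\<delta> + of_nat N - of_nat m) * dual_hahn_coeff N g m k"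
proof -
  have "g * (of_nat m - of_nat N) * dual_hahn_coeff N g (Suc m) k
      + g * (\<delta> + of_nat N - of_nat m) * dual_hahn_coeff N g m k
    = (g + of_nat k) * ((of_nat m - of_nat N) * dual_hahn_coeff N (g + 1) (Suc m) k
      + (\<delta> + of_nat N - of_nat m) * dual_hahn_coeff N (g + 1) m k)"
    unfolding mult.assoc[of g] mult.left_commute[of g] dual_hahn_coeff_shift_param[OF assms(1)]
    by (simp add: algebra_simps)
  moreover have "(of_nat k * (of_nat k + g + \<delta>) + g * \<delta>) * dual_hahn_coeff N (g + 1) m k
      - (if k = 0 then 0 else dual_hahn_coeff N (g + 1) m (k - 1))
    = (g + of_nat k) * ((of_nat m - of_nat N) * dual_hahn_coeff N (g + 1) (Suc m) k
      + (\<delta> + of_nat N - of_nat m) * dual_hahn_coeff N (g + 1) m k)"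
  proof (cases k)
    case 0
    then show ?thesis by (simp add: dual_hahn_coeff_def algebra_simps)
  next
    case (Suc j)
    define u where "u = dual_hahn_coeff N (g + 1) m j"
    define V where "V = 1 / ((g + 1 + of_nat j) * (of_nat j - of_nat N) * (of_nat j + 1))"
    have e1: "dual_hahn_coeff N (g + 1) (Suc m) (Suc j) = u * (- of_nat (Suc m)) * V"
      unfolding u_def V_def by (rule dual_hahn_coeff_Suc_Suc)
    have e2: "dual_hahn_coeff N (g + 1) m (Suc j) = u * (of_nat j - of_nat m) * V"
      unfolding u_def V_def by (rule dual_hahn_coeff_Suc_right)
    have "(g + of_nat (Suc j)) * pochhammer g (Suc j) \<noteq> 0"
      using assms(1) unfolding Suc pochhammer_rec'[of g "Suc j"] .
    then have "g + of_nat (Suc j) \<noteq> 0"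
      by (metis mult_zero_left)
    then have "g + 1 + of_nat j \<noteq> 0"
      by (simp add: add_ac)
    moreover have "(of_nat j - of_nat N :: complex) \<noteq> 0"
      using assms(2) Suc by simp
    moreover have "(of_nat j + 1 :: complex) \<noteq> 0"
      by (metis of_nat_Suc of_nat_neq_0 add.commute)
    ultimately have e3: "dual_hahn_coeff N (g + 1) m j
        = u * V * ((g + 1 + of_nat j) * (of_nat j - of_nat N) * (of_nat j + 1))"
      unfolding u_def V_def by simp
    show ?thesis
      unfolding Suc e1 e2 diff_Suc_1 e3 if_not_P[OF Suc_neq_Zero] by (simp add: algebra_simps)
  qed
  ultimately show ?thesis by simp
qed

lemma pochhammer_pair_mult_shift:
  fixes y s :: "'a::comm_ring_1"
  shows "y * (y + s) * (pochhammer (- y) k * pochhammer (y + s) k)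
    = of_nat k * (of_nat k + s) * (pochhammer (- y) k * pochhammer (y + s) k)
      - pochhammer (- y) (Suc k) * pochhammer (y + s) (Suc k)"
  by (simp add: pochhammer_rec' algebra_simps)

lemma dual_hahn_contiguous_lambda:
  assumes "m < N" "pochhammer (\<gamma> + 1) (Suc (Suc m)) \<noteq> 0"
  shows "(y * (y + \<gamma> + \<delta> + 1) + (\<gamma> + 1) * \<delta>) * dual_hahn m y (\<gamma> + 1) (\<delta> - 1) N
    = (\<gamma> + 1) * (of_nat m - of_nat N) * dual_hahn (Suc m) y \<gamma> \<delta> N
      + (\<gamma> + 1) * (\<delta> + of_nat N - of_nat m) * dual_hahn m y \<gamma> \<delta> N"
proof -
  define D where "D = dual_hahn_coeff N (\<gamma> + 1)"
  define D' where "D' = dual_hahn_coeff N (\<gamma> + 1 + 1) m"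
  define Q where "Q = (\<lambda>k. pochhammer (- y) k * pochhammer (y + \<gamma> + \<delta> + 1) k)"
  define e where "e = (\<lambda>k. of_nat k * (of_nat k + (\<gamma> + 1) + \<delta>) + (\<gamma> + 1) * \<delta>)"
  have R: "dual_hahn n y \<gamma> \<delta> N = (\<Sum>k\<le>Suc m. D n k * Q k)" if "n \<le> Suc m" for n
    unfolding D_def Q_def using that by (rule dual_hahn_conv_coeff)
  have "\<gamma> + 1 + (\<delta> - 1) = \<gamma> + \<delta>" by simp
  then have R': "dual_hahn m y (\<gamma> + 1) (\<delta> - 1) N = (\<Sum>k\<le>m. D' k * Q k)"
    unfolding D'_def Q_def using dual_hahn_conv_coeff[OF order.refl, of m y "\<gamma> + 1" "\<delta> - 1" N]
    by (simp add: add.assoc)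
  have shift: "(y * (y + \<gamma> + \<delta> + 1) + (\<gamma> + 1) * \<delta>) * Q k = e k * Q k - Q (Suc k)" for k
    using pochhammer_pair_mult_shift[of y "\<gamma> + \<delta> + 1" k]
    unfolding Q_def e_def by (simp add: algebra_simps)
  have coeff: "e k * D' k - (if k = 0 then 0 else D' (k - 1))
      = (\<gamma> + 1) * (of_nat m - of_nat N) * D (Suc m) k + (\<gamma> + 1) * (\<delta> + of_nat N - of_nat m) * D m k"
    if "k \<le> Suc m" for k
  proof -
    have "pochhammer (\<gamma> + 1) (Suc k) \<noteq> 0"
      using assms(2) pochhammer_eq_0_mono[of "\<gamma> + 1" "Suc k" "Suc (Suc m)"] that by auto
    moreover have "k \<le> N" using assms(1) that by simp
    ultimately show ?thesis
      using dual_hahn_coeff_contiguous_lambda[of "\<gamma> + 1" k N \<delta> m] unfolding D_def D'_def e_def by simp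
  qed
  have "(y * (y + \<gamma> + \<delta> + 1) + (\<gamma> + 1) * \<delta>) * dual_hahn m y (\<gamma> + 1) (\<delta> - 1) N
      = (\<Sum>k\<le>Suc m. (e k * D' k - (if k = 0 then 0 else D' (k - 1))) * Q k)"
    unfolding R' using shift by (rule sum_mult_shift_basis) (simp add: D'_def dual_hahn_coeff_eq_0)
  also have "\<dots> = (\<gamma> + 1) * (of_nat m - of_nat N) * (\<Sum>k\<le>Suc m. D (Suc m) k * Q k)
      + (\<gamma> + 1) * (\<delta> + of_nat N - of_nat m) * (\<Sum>k\<le>Suc m. D m k * Q k)"
    unfolding sum_distrib_left sum.distrib[symmetric]
  proof (intro sum.cong refl)
    fix k assume "k \<in> {..Suc m}"
    then show "(e k * D' k - (if k = 0 then 0 else D' (k - 1))) * Q k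
      = (\<gamma> + 1) * (of_nat m - of_nat N) * (D (Suc m) k * Q k)
        + (\<gamma> + 1) * (\<delta> + of_nat N - of_nat m) * (D m k * Q k)"
      by (simp only: atMost_iff coeff distrib_right mult.assoc)
  qed
  finally show ?thesis by (simp add: R)
qed

section \<open>Interlacing the two dual Hahn families\<close>

lemma three_term_recurrence_unique:
  fixes f g :: "nat \<Rightarrow> 'a::idom"
  assumes "f 0 = g 0" "f 1 = g 1"
    and "\<And>n. Suc n < M \<Longrightarrow> b n \<noteq> 0"
    and "\<And>n. Suc n < M \<Longrightarrow> b n * f (Suc (Suc n)) + c n * f n = a n * f (Suc n)"
    and "\<And>n. Suc n < M \<Longrightarrow> b n * g (Suc (Suc n)) + c n * g n = a n * g (Suc n)"
    and "n \<le> M"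
  shows "f n = g n"
  using assms(6)
proof (induction n rule: less_induct)
  case (less n)
  consider "n = 0" | "n = 1" | j where "n = Suc (Suc j)"
    by (metis One_nat_def not0_implies_Suc)
  then show ?case
  proof cases
    case 3
    with less have IH: "f (Suc j) = g (Suc j)" "f j = g j" and "Suc j < M" by auto
    have "b j * f (Suc (Suc j)) + c j * f j = b j * g (Suc (Suc j)) + c j * g j"
      using assms(4,5)[OF \<open>Suc j < M\<close>] unfolding IH by simp
    then have "b j * f (Suc (Suc j)) = b j * g (Suc (Suc j))"
      unfolding IH by simp
    with assms(3)[OF \<open>Suc j < M\<close>] show ?thesis unfolding 3 by simp
  qed (use assms(1,2) in simp_all)
qed

lemma of_int_add_half_neq_zero: "(of_int a + 1/2 :: 'a::field_char_0) \<noteq> 0"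
proof
  assume "(of_int a + 1/2 :: 'a) = 0"
  then have "(of_int (2 * a + 1) :: 'a) = 0" by (simp add: field_simps)
  then show False by presburger
qed

lemma pochhammer_of_int_add_half_neq_zero: "pochhammer (of_int a + 1/2 :: 'a::field_char_0) k \<noteq> 0"
proof
  assume "pochhammer (of_int a + 1/2 :: 'a) k = 0"
  then obtain n where "(of_int a + 1/2 :: 'a) = - of_nat n" by (auto simp: pochhammer_eq_0_iff)
  then have "(of_int (a + int n) + 1/2 :: 'a) = 0" by (simp add: algebra_simps eq_neg_iff_add_eq_0)
  then show False using of_int_add_half_neq_zero by blast
qed

lemma pochhammer_neg_nat_minus_half_neq_zero:
  "pochhammer (- of_nat N - 1/2 :: 'a::field_char_0) k \<noteq> 0"
proof -
  have "(- of_nat N - 1/2 :: 'a) = of_int (- int N - 1) + 1/2" by simp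
  then show ?thesis by (metis pochhammer_of_int_add_half_neq_zero)
qed

lemma pochhammer_half_neq_zero: "pochhammer (1/2 :: 'a::field_char_0) k \<noteq> 0"
  using pochhammer_of_int_add_half_neq_zero[of 0 k] by simp

definition interlaced_dual_hahn :: "nat \<Rightarrow> complex \<Rightarrow> nat \<Rightarrow> complex" where
  "interlaced_dual_hahn N x n =
    (if even n
     then pochhammer (1/2) (n div 2) / pochhammer (- of_nat N - 1/2) (n div 2)
          * dual_hahn (n div 2) x (-1/2) (1/2) N
     else pochhammer (3/2) (n div 2) / pochhammer (- of_nat N - 1/2) (n div 2 + 1)
          * (x + 1/2) * dual_hahn (n div 2) x (1/2) (-1/2) N)"

lemma interlaced_dual_hahn_even:
  "interlaced_dual_hahn N x (2 * m) = pochhammer (1/2) m / pochhammer (- of_nat N - 1/2) m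
     * dual_hahn m x (-1/2) (1/2) N"
  by (simp add: interlaced_dual_hahn_def)

lemma interlaced_dual_hahn_odd:
  "interlaced_dual_hahn N x (2 * m + 1) = pochhammer (3/2) m / pochhammer (- of_nat N - 1/2) (m + 1)
     * (x + 1/2) * dual_hahn m x (1/2) (-1/2) N"
  by (simp add: interlaced_dual_hahn_def)

lemma pochhammer_three_halves:
  "pochhammer (3/2 :: 'a::field_char_0) m = (2 * of_nat m + 1) * pochhammer (1/2) m"
proof -
  have "pochhammer (1/2 :: 'a) (Suc m) = 1/2 * pochhammer (3/2) m"
    by (simp add: pochhammer_rec)
  moreover have "pochhammer (1/2 :: 'a) (Suc m) = (1/2 + of_nat m) * pochhammer (1/2) m"
    by (rule pochhammer_rec')
  ultimately show ?thesis by (simp add: algebra_simps)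
qed

lemma interlaced_dual_hahn_step_even:
  fixes x :: complex
  assumes "m < N"
  defines "F \<equiv> interlaced_dual_hahn N x"
  shows "(of_nat (2 * N) - of_nat (2 * m)) * F (2 * m + 2) + of_nat (2 * m + 1) * F (2 * m)
    = - (2 * x + 1) * F (2 * m + 1)"
proof -
  define R where "R = (\<lambda>k. dual_hahn k x (-1/2) (1/2) N)"
  define a where "a = (- of_nat N - 1/2 :: complex)"
  define h where "h = pochhammer (1/2 :: complex) m"
  define P where "P = pochhammer a m"
  have "P \<noteq> 0" "a + of_nat m \<noteq> 0"
    using pochhammer_neg_nat_minus_half_neq_zero[of N m] pochhammer_neg_nat_minus_half_neq_zero[of N "Suc m"]
    unfolding P_def a_def pochhammer_rec'[of _ m] by auto
  have rel: "(x + 1/2)^2 * dual_hahn m x (1/2) (-1/2) N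
      = (of_nat m - of_nat N) / 2 * R (Suc m) - (a + of_nat m) / 2 * R m"
  proof -
    have "pochhammer (- 1/2 + 1 :: complex) (Suc (Suc m)) \<noteq> 0"
      using pochhammer_half_neq_zero[where 'a=complex] by simp
    from dual_hahn_contiguous_lambda[of m N "-1/2" x "1/2", OF assms(1) this]
    show ?thesis unfolding R_def a_def by (simp add: power2_eq_square field_simps)
  qed
  define c where "c = (2 * of_nat m + 1) * h / (P * (a + of_nat m))"
  have Pa: "pochhammer a (m + 1) = P * (a + of_nat m)"
    unfolding P_def by (simp add: pochhammer_rec')
  have "F (2 * m) = h / P * R m"
    unfolding F_def h_def P_def a_def R_def by (rule interlaced_dual_hahn_even)
  then have F0: "of_nat (2 * m + 1) * F (2 * m) = c * (a + of_nat m) * R m"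
    unfolding c_def using \<open>a + of_nat m \<noteq> 0\<close> by simp
  have F1: "F (2 * m + 1) = c * (x + 1/2) * dual_hahn m x (1/2) (-1/2) N"
    unfolding F_def h_def c_def interlaced_dual_hahn_odd pochhammer_three_halves a_def[symmetric] Pa ..
  have "F (2 * Suc m) = pochhammer (1/2) (Suc m) / pochhammer a (Suc m) * R (Suc m)"
    unfolding F_def a_def R_def by (rule interlaced_dual_hahn_even)
  then have F2: "F (2 * m + 2) = c / 2 * R (Suc m)"
    unfolding pochhammer_rec'[of _ m] c_def h_def P_def by (simp add: field_simps)
  have "- (2 * x + 1) * F (2 * m + 1) = - 2 * c * ((x + 1/2)^2 * dual_hahn m x (1/2) (-1/2) N)"
    unfolding F1 by (simp add: power2_eq_square field_simps)
  also have "\<dots> = (of_nat (2 * N) - of_nat (2 * m)) * F (2 * m + 2) + of_nat (2 * m + 1) * F (2 * m)"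
    unfolding rel F0 F2 by (simp add: field_simps)
  finally show ?thesis ..
qed

lemma interlaced_dual_hahn_step_odd:
  fixes N m :: nat and x :: complex
  defines "F \<equiv> interlaced_dual_hahn N x"
  shows "(of_nat (2 * N) - of_nat (2 * m + 1)) * F (2 * m + 3) + of_nat (2 * m + 2) * F (2 * m + 1)
    = - (2 * x + 1) * F (2 * m + 2)"
proof -
  define R where "R = (\<lambda>k. dual_hahn k x (1/2) (-1/2) N)"
  define a where "a = (- of_nat N - 1/2 :: complex)"
  define P where "P = pochhammer a (m + 1)"
  define c where "c = pochhammer (1/2) (m + 1) / P"
  define d where "d = a + of_nat (m + 1)"
  have "P \<noteq> 0" "d \<noteq> 0"
    using pochhammer_neg_nat_minus_half_neq_zero[of N "m + 1"] pochhammer_neg_nat_minus_half_neq_zero[of N "m + 2"]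
    unfolding P_def d_def a_def by (auto simp: pochhammer_rec')
  have rel: "dual_hahn (Suc m) x (-1/2) (1/2) N = (2 * of_nat m + 3) * R (Suc m) - 2 * of_nat (Suc m) * R m"
  proof -
    have "pochhammer (- 1/2 + 1 :: complex) (Suc (Suc m)) \<noteq> 0"
      using pochhammer_half_neq_zero[where 'a=complex] by simp
    from dual_hahn_contiguous_param[OF this, of x "1/2" N]
    show ?thesis unfolding R_def by (simp add: field_simps)
  qed
  have F1: "F (2 * m + 1) = 2 * c * (x + 1/2) * R m"
    unfolding F_def c_def P_def a_def R_def interlaced_dual_hahn_odd
    by (simp add: pochhammer_rec)
  have F2: "F (2 * m + 2) = c * dual_hahn (Suc m) x (-1/2) (1/2) N"
    using interlaced_dual_hahn_even[of N x "Suc m"] unfolding F_def c_def P_def a_def by simp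
  have "2 * m + 3 = 2 * (m + 1) + 1" by simp
  then have "F (2 * m + 3) = pochhammer (3/2) (m + 1) / pochhammer a (m + 1 + 1) * (x + 1/2) * R (m + 1)"
    unfolding F_def a_def R_def by (simp only: interlaced_dual_hahn_odd)
  moreover have "pochhammer a (m + 1 + 1) = P * d"
    unfolding P_def d_def Suc_eq_plus1[symmetric] pochhammer_rec'[of a "Suc m"] by (rule mult.commute)
  ultimately have "d * F (2 * m + 3) = (2 * of_nat m + 3) * c * (x + 1/2) * R (Suc m)"
    unfolding pochhammer_three_halves c_def using \<open>P \<noteq> 0\<close> \<open>d \<noteq> 0\<close> by (simp add: field_simps)
  moreover have "of_nat (2 * N) - of_nat (2 * m + 1) = - 2 * d"
    unfolding d_def a_def by (simp add: algebra_simps)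
  ultimately have F3: "(of_nat (2 * N) - of_nat (2 * m + 1)) * F (2 * m + 3)
      = - 2 * ((2 * of_nat m + 3) * c * (x + 1/2) * R (Suc m))"
    by (metis mult.assoc)
  show ?thesis
    unfolding F1 F2 F3 rel by (simp add: algebra_simps)
qed

lemma interlaced_dual_hahn_recurrence:
  assumes "Suc n < 2 * N + 1"
  shows "(of_nat (2 * N) - of_nat n) * interlaced_dual_hahn N x (Suc (Suc n))
      + of_nat (Suc n) * interlaced_dual_hahn N x n
    = - (2 * x + 1) * interlaced_dual_hahn N x (Suc n)"
proof (cases "even n")
  case True
  then obtain m where n: "n = 2 * m" by blast
  with assms have "m < N" by simp
  have "Suc (2 * m) = 2 * m + 1" "Suc (2 * m + 1) = 2 * m + 2" by simp_all
  with interlaced_dual_hahn_step_even[OF \<open>m < N\<close>] show ?thesis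
    unfolding n by metis
next
  case False
  then obtain m where n: "n = 2 * m + 1" using oddE by blast
  have "Suc (2 * m + 1) = 2 * m + 2" "Suc (2 * m + 2) = 2 * m + 3" by simp_all
  with interlaced_dual_hahn_step_odd show ?thesis
    unfolding n by metis
qed

lemma krawtchouk_half_recurrence:
  fixes x :: complex
  assumes "Suc n < 2 * N + 1"
  defines "K \<equiv> \<lambda>n. krawtchouk n (x + of_nat N + 1) (1/2) (2 * N + 1)"
  shows "(of_nat (2 * N) - of_nat n) * K (Suc (Suc n)) + of_nat (Suc n) * K n = - (2 * x + 1) * K (Suc n)"
proof -
  have "1/2 * (of_nat (2 * N + 1) - of_nat (Suc n)) * K (Suc (Suc n)) + of_nat (Suc n) * (1 - 1/2) * K n
      = (1/2 * (of_nat (2 * N + 1) - of_nat (Suc n)) + of_nat (Suc n) * (1 - 1/2) - (x + of_nat N + 1)) * K (Suc n)"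
    unfolding K_def using assms by (intro krawtchouk_recurrence) simp_all
  moreover have "(of_nat (2 * N) - of_nat n) * K (Suc (Suc n)) + of_nat (Suc n) * K n + (2 * x + 1) * K (Suc n)
    = 2 * (1/2 * (of_nat (2 * N + 1) - of_nat (Suc n)) * K (Suc (Suc n)) + of_nat (Suc n) * (1 - 1/2) * K n
      - (1/2 * (of_nat (2 * N + 1) - of_nat (Suc n)) + of_nat (Suc n) * (1 - 1/2) - (x + of_nat N + 1)) * K (Suc n))"
    by (simp add: field_simps)
  ultimately have
    "(of_nat (2 * N) - of_nat n) * K (Suc (Suc n)) + of_nat (Suc n) * K n + (2 * x + 1) * K (Suc n) = 0"
    by simp
  then show ?thesis
    unfolding eq_neg_iff_add_eq_0[symmetric] by (simp add: algebra_simps)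
qed

lemma krawtchouk_half_one:
  "krawtchouk 1 (x + of_nat N + 1) (1/2) (2 * N + 1) = interlaced_dual_hahn N x 1"
proof -
  define D where "D = (2 * of_nat N + 1 :: complex)"
  have "D \<noteq> 0"
    unfolding D_def by (metis of_nat_Suc of_nat_neq_0 of_nat_mult of_nat_numeral add.commute)
  have X: "x + of_nat N + 1 = (x + 1/2) + D/2" and M: "of_nat (2 * N + 1) = D"
    unfolding D_def by (simp_all add: field_simps)
  have K1: "krawtchouk 1 (x + of_nat N + 1) (1/2) (2 * N + 1) = 1 - ((x + 1/2) + D/2) / (D * (1/2))"
    unfolding krawtchouk_one X M ..
  have "- of_nat N - 1/2 = - D/2"
    unfolding D_def by (simp add: field_simps)
  then have F1: "interlaced_dual_hahn N x 1 = (x + 1/2) / (- D/2)"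
    using interlaced_dual_hahn_odd[of N x 0] by (simp add: dual_hahn_def)
  show ?thesis
    unfolding K1 F1 using \<open>D \<noteq> 0\<close> by (simp add: field_simps)
qed

lemma krawtchouk_half_eq_interlaced_dual_hahn:
  assumes "n \<le> 2 * N + 1"
  shows "krawtchouk n (x + of_nat N + 1) (1/2) (2 * N + 1) = interlaced_dual_hahn N x n"
proof (rule three_term_recurrence_unique[OF _ _ _ _ _ assms])
  show "krawtchouk 0 (x + of_nat N + 1) (1/2) (2 * N + 1) = interlaced_dual_hahn N x 0"
    by (simp add: krawtchouk_def interlaced_dual_hahn_def dual_hahn_def)
  show "krawtchouk 1 (x + of_nat N + 1) (1/2) (2 * N + 1) = interlaced_dual_hahn N x 1"
    by (rule krawtchouk_half_one)
next
  fix j assume j: "Suc j < 2 * N + 1"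
  then have "2 * N \<noteq> j" by simp
  then show "of_nat (2 * N) - of_nat j \<noteq> (0 :: complex)"
    by (metis eq_iff_diff_eq_0 of_nat_eq_iff)
qed (fact krawtchouk_half_recurrence interlaced_dual_hahn_recurrence)+

theorem mainTheorem17:
  fixes N m :: nat and x :: complex
  assumes "m \<le> N"
  shows "(krawtchouk (2*m) (x + of_nat N + 1) (1/2) (2*N+1)
           = pochhammer (1/2) m / pochhammer (- of_nat N - 1/2) m
             * dual_hahn m x (-1/2) (1/2) N)
    \<and> (krawtchouk (2*m+1) (x + of_nat N + 1) (1/2) (2*N+1)
           = pochhammer (3/2) m / pochhammer (- of_nat N - 1/2) (m+1)
             * (x + 1/2) * dual_hahn m x (1/2) (-1/2) N)"
  using krawtchouk_half_eq_interlaced_dual_hahn[of "2 * m" N x]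
    krawtchouk_half_eq_interlaced_dual_hahn[of "2 * m + 1" N x] assms
  unfolding interlaced_dual_hahn_even interlaced_dual_hahn_odd by simp

end
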